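(* Let $\kappa>0$, $\nu\in\mathbb R$, and on $\mathbb H$ (the logarithmic chart) let $\delta(z)=4\cot\frac z2-2\nu$ and $\sigma(z)=-2\sqrt\kappa$ (the radial SLE with drift; in the half-plane chart, via $z\mapsto\tan\frac z2$, these are $\delta=2(\frac1z+z)-\nu(1+z^2)$, $\sigma=-\sqrt\kappa(1+z^2)$). Let $$\Gamma_{tw}(z,w)=-\frac12\log\frac{\tan\frac{z-w}4\,\tan\frac{\bar z-\bar w}4}{\tan\frac{\bar z-w}4\,\tan\frac{z-\bar w}4},\qquad z,w\in\mathbb H.$$ Suppose there exist $\mu,\mu^*\in\mathbb C$ and a real-valued $C^2$ function $\eta$ on $\mathbb H$ (the logarithmic-chart representative of a real pre-pre-Schwarzian of order $(\mu,\mu^* )$) such that, for all $z\ne w$ in $\mathbb H$, $$\mathcal{L}_\delta\eta+\tfrac12\mathcal{L}_\sigma^2\eta=0,\qquad \mathcal{L}_\delta\Gamma_{tw}(z,w)+\mathcal{L}_\sigma\eta(z)\,\mathcal{L}_\sigma\eta(w)=0,\qquad \mathcal{L}_\sigma\Gamma_{tw}(z,w)=0.$$ Then $\kappa=4$ and $\nu=0$.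
   Context: The logarithmic chart is related to the unit-disk chart by $z\mapsto e^{iz}$ and to the half-plane chart by $z\mapsto\tan\frac z2$; it is multivalued, and $\Gamma_{tw}$ is $4\pi$-periodic and $2\pi$-antiperiodic in each variable (a Green's function on the double cover of the disk punctured at the radial fixed point). Lie derivatives: $\mathcal{L}_v\eta=v\partial_z\eta+\bar v\partial_{\bar z}\eta+\mu v'+\mu^*\overline{v'}$; for a scalar $\rho$, $\mathcal L_v\rho=v\partial_z\rho+\bar v\partial_{\bar z}\rho$; $\mathcal L^2_\sigma\eta=\mathcal L_\sigma(\mathcal L_\sigma\eta)$ with $\mathcal L_\sigma\eta$ treated as a scalar; $\mathcal{L}_v\Gamma(z,w)=v(z)\partial_z\Gamma+\overline{v(z)}\partial_{\bar z}\Gamma+v(w)\partial_w\Gamma+\overline{v(w)}\partial_{\bar w}\Gamma$. *)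

theory Defs
  imports "HOL-Analysis.Analysis"
begin

definition upper_half :: "complex set" where
  "upper_half = {z. Im z > 0}"

definition px :: "(complex \<Rightarrow> complex) \<Rightarrow> complex \<Rightarrow> complex" where
  "px f z = vector_derivative (\<lambda>t::real. f (z + of_real t)) (at 0)"

definition py :: "(complex \<Rightarrow> complex) \<Rightarrow> complex \<Rightarrow> complex" where
  "py f z = vector_derivative (\<lambda>t::real. f (z + \<i> * of_real t)) (at 0)"

definition wz :: "(complex \<Rightarrow> complex) \<Rightarrow> complex \<Rightarrow> complex" where
  "wz f z = (px f z - \<i> * py f z) / 2"

definition wzb :: "(complex \<Rightarrow> complex) \<Rightarrow> complex \<Rightarrow> complex" where
  "wzb f z = (px f z + \<i> * py f z) / 2"

definition lie_scalar :: "(complex \<Rightarrow> complex) \<Rightarrow> (complex \<Rightarrow> complex) \<Rightarrow> complex \<Rightarrow> complex" where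
  "lie_scalar v \<rho> z = v z * wz \<rho> z + cnj (v z) * wzb \<rho> z"

definition lie_pps :: "complex \<Rightarrow> complex \<Rightarrow> (complex \<Rightarrow> complex) \<Rightarrow> (complex \<Rightarrow> complex) \<Rightarrow> complex \<Rightarrow> complex" where
  "lie_pps \<mu> \<mu>s v \<eta> z = lie_scalar v \<eta> z + \<mu> * deriv v z + \<mu>s * cnj (deriv v z)"

definition lie_two :: "(complex \<Rightarrow> complex) \<Rightarrow> (complex \<Rightarrow> complex \<Rightarrow> complex) \<Rightarrow> complex \<Rightarrow> complex \<Rightarrow> complex" where
  "lie_two v G z w =
     v z * wz (\<lambda>z'. G z' w) z + cnj (v z) * wzb (\<lambda>z'. G z' w) z
   + v w * wz (\<lambda>w'. G z w') w + cnj (v w) * wzb (\<lambda>w'. G z w') w"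

definition Gamma_tw :: "complex \<Rightarrow> complex \<Rightarrow> complex" where
  "Gamma_tw z w = - (1/2) * Ln ((tan ((z - w) / 4) * tan ((cnj z - cnj w) / 4))
                              / (tan ((cnj z - w) / 4) * tan ((z - cnj w) / 4)))"

definition C2_on :: "complex set \<Rightarrow> (complex \<Rightarrow> real) \<Rightarrow> bool" where
  "C2_on S f \<longleftrightarrow> (\<exists>(f' :: complex \<Rightarrow> (complex \<Rightarrow>\<^sub>L real)) f''.
       (\<forall>z\<in>S. (f has_derivative blinfun_apply (f' z)) (at z)) \<and>
       (\<forall>z\<in>S. (f' has_derivative blinfun_apply (f'' z)) (at z)) \<and>
       continuous_on S f'')"

end

theory Submission
  imports Defs
begin

text \<open>
  Since \<open>\<sigma>\<close> is a constant real field, \<open>\<L>\<^sub>\<sigma>\<eta> = -2\<surd>\<kappa> \<partial>\<^sub>x\<eta>\<close>. A direct computation gives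
  \<open>\<L>\<^sub>\<delta>\<Gamma>\<^sub>t\<^sub>w(z,w) = -4 Im A(z) Im A(w)\<close> with \<open>A(z) = 1 / sin (z/2)\<close>, so the second equation
  forces \<open>\<partial>\<^sub>x\<eta> = c Im A\<close> with \<open>\<kappa> c\<^sup>2 = 1\<close>. Now \<open>A\<close> is \<open>2\<pi>\<close>-antiperiodic while \<open>\<delta>\<close> is
  \<open>2\<pi>\<close>-periodic: comparing the first equation at \<open>z\<close> and \<open>z + 2\<pi>\<close> cancels the unknown terms in
  \<open>\<mu>\<close>, \<open>\<mu>\<^sup>*\<close>, and the jump of \<open>\<partial>\<^sub>y\<eta>\<close> is read off from a primitive of \<open>A\<close>. What remains is
  \<open>Im (\<delta> A + 2\<kappa> A') = Im (((4 - \<kappa>) cos (z/2) - 2\<nu> sin (z/2)) / sin\<^sup>2 (z/2)) = 0\<close> on the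
  half-plane, and evaluating at \<open>2i\<close> and \<open>\<pi> + 2i\<close> gives \<open>\<nu> = 0\<close> and \<open>\<kappa> = 4\<close>.
\<close>

lemma DERIV_logderiv_mult:
  assumes "(f has_field_derivative a * f x) (at x)" and "(g has_field_derivative b * g x) (at x)"
  shows "((\<lambda>y. f y * g y) has_field_derivative (a + b) * (f x * g x)) (at x)"
  using DERIV_mult[OF assms] by (simp add: algebra_simps)

lemma DERIV_logderiv_divide:
  assumes "(f has_field_derivative a * f x) (at x)" and "(g has_field_derivative b * g x) (at x)"
    and "g x \<noteq> 0"
  shows "((\<lambda>y. f y / g y) has_field_derivative (a - b) * (f x / g x)) (at x)"
proof -
  have "(a * f x * g x - f x * (b * g x)) / (g x * g x) = (a - b) * (f x / g x)"
    using assms(3) by (simp add: field_simps)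
  with DERIV_divide[OF assms] show ?thesis by simp
qed

lemma DERIV_Ln_logderiv:
  assumes "(f has_field_derivative a * f x) (at x)" and "f x \<notin> \<real>\<^sub>\<le>\<^sub>0"
  shows "((\<lambda>y. Ln (f y)) has_field_derivative a) (at x)"
proof -
  have "f x \<noteq> 0" using assms(2) by auto
  with DERIV_chain2[OF has_field_derivative_Ln[OF assms(2)] assms(1)] show ?thesis
    by (simp add: field_simps)
qed

lemma DERIV_tan_logderiv:
  fixes b v x :: complex
  assumes "sin (2 * (b + x * v)) \<noteq> 0"
  shows "((\<lambda>\<zeta>. tan (b + \<zeta> * v)) has_field_derivative 2 * v / sin (2 * (b + x * v)) * tan (b + x * v)) (at x)"
proof -
  have "cos (b + x * v) \<noteq> 0" "sin (b + x * v) \<noteq> 0"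
    using assms sin_double[of "b + x * v"] by auto
  moreover have "((\<lambda>\<zeta>. tan (b + \<zeta> * v)) has_field_derivative inverse ((cos (b + x * v))\<^sup>2) * v) (at x)"
    using \<open>cos (b + x * v) \<noteq> 0\<close> by (auto intro!: derivative_eq_intros)
  moreover have "sin (2 * (b + x * v)) = 2 * sin (b + x * v) * cos (b + x * v)"
    by (rule sin_double)
  ultimately show ?thesis
    by (simp add: tan_def field_simps power2_eq_square)
qed

lemma sin_nonzero_if_Im_nonzero:
  fixes x :: complex
  assumes "Im x \<noteq> 0"
  shows "sin x \<noteq> 0"
  using assms by (auto simp: sin_eq_0)

section \<open>Lie derivatives of the twisted Green's function\<close>

lemma Gamma_tw_has_vector_derivative:
  fixes z w v u :: complex
  assumes z: "Im z > 0" and w: "Im w > 0" and zw: "sin ((z - w) / 2) \<noteq> 0"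
  shows "((\<lambda>t. Gamma_tw (z + of_real t * v) (w + of_real t * u)) has_vector_derivative
     - ((v - u) * inverse (sin ((z - w) / 2)) + (cnj v - cnj u) * inverse (sin ((cnj z - cnj w) / 2))
        - (cnj v - u) * inverse (sin ((cnj z - w) / 2)) - (v - cnj u) * inverse (sin ((z - cnj w) / 2))) / 4)
     (at 0)"
proof -
  define b1 where "b1 = (z - w) / 4"
  define b2 where "b2 = (cnj z - cnj w) / 4"
  define b3 where "b3 = (cnj z - w) / 4"
  define b4 where "b4 = (z - cnj w) / 4"
  define g where "g = (\<lambda>\<zeta>. tan (b1 + \<zeta> * ((v - u) / 4)) * tan (b2 + \<zeta> * ((cnj v - cnj u) / 4))
      / (tan (b3 + \<zeta> * ((cnj v - u) / 4)) * tan (b4 + \<zeta> * ((v - cnj u) / 4))))"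
  have double: "2 * b1 = (z - w) / 2" "2 * b2 = cnj ((z - w) / 2)"
      "2 * b3 = (cnj z - w) / 2" "2 * b4 = (z - cnj w) / 2"
    by (simp_all add: b1_def b2_def b3_def b4_def)
  have "sin (2 * b2) = cnj (sin ((z - w) / 2))"
    by (simp only: double cnj_sin)
  then have s1: "sin (2 * b1) \<noteq> 0" and s2: "sin (2 * b2) \<noteq> 0"
    using zw by (simp_all add: double)
  have s3: "sin (2 * b3) \<noteq> 0" and s4: "sin (2 * b4) \<noteq> 0"
    using z w by (auto simp: double intro!: sin_nonzero_if_Im_nonzero)
  have tan: "tan b1 \<noteq> 0" "tan b3 \<noteq> 0" "tan b4 \<noteq> 0"
    using s1 s3 s4 by (auto simp: sin_double tan_def)
  \<comment> \<open>\<open>b2 = cnj b1\<close> and \<open>b3 = cnj b4\<close>, so the argument of \<open>Ln\<close> at \<open>t = 0\<close> is positive.\<close>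
  moreover have "g 0 = tan b1 * cnj (tan b1) / (tan b4 * cnj (tan b4))"
    by (simp add: g_def b1_def b2_def b3_def b4_def cnj_tan mult.commute)
  then have "g 0 = of_real ((norm (tan b1))\<^sup>2 / (norm (tan b4))\<^sup>2)"
    by (simp only: of_real_divide complex_norm_square)
  ultimately have g0: "g 0 \<notin> \<real>\<^sub>\<le>\<^sub>0"
    by (simp add: complex_nonpos_Reals_iff not_le)
  have "(g has_field_derivative
      (2 * ((v - u) / 4) / sin (2 * b1) + 2 * ((cnj v - cnj u) / 4) / sin (2 * b2)
       - (2 * ((cnj v - u) / 4) / sin (2 * b3) + 2 * ((v - cnj u) / 4) / sin (2 * b4))) * g 0) (at 0)"
    unfolding g_def
    by (rule DERIV_cong,
        (rule DERIV_logderiv_divide DERIV_logderiv_mult DERIV_tan_logderiv | simp add: s1 s2 s3 s4 tan)+)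
  moreover have "- 1 / 2 * (2 * ((v - u) / 4) / sin (2 * b1) + 2 * ((cnj v - cnj u) / 4) / sin (2 * b2)
       - (2 * ((cnj v - u) / 4) / sin (2 * b3) + 2 * ((v - cnj u) / 4) / sin (2 * b4)))
    = - ((v - u) * inverse (sin ((z - w) / 2)) + (cnj v - cnj u) * inverse (sin ((cnj z - cnj w) / 2))
        - (cnj v - u) * inverse (sin ((cnj z - w) / 2)) - (v - cnj u) * inverse (sin ((z - cnj w) / 2))) / 4"
    using s1 s2 s3 s4 unfolding double by (simp add: field_simps)
  ultimately have "((\<lambda>\<zeta>. - 1 / 2 * Ln (g \<zeta>)) has_field_derivative
     - ((v - u) * inverse (sin ((z - w) / 2)) + (cnj v - cnj u) * inverse (sin ((cnj z - cnj w) / 2))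
        - (cnj v - u) * inverse (sin ((cnj z - w) / 2)) - (v - cnj u) * inverse (sin ((z - cnj w) / 2))) / 4)
     (at 0)"
    using g0 by (metis DERIV_cmult DERIV_Ln_logderiv)
  moreover have "Gamma_tw (z + of_real t * v) (w + of_real t * u) = - 1 / 2 * Ln (g (of_real t))" for t
  proof -
    have args: "(z + of_real t * v - (w + of_real t * u)) / 4 = b1 + of_real t * ((v - u) / 4)"
      "(cnj (z + of_real t * v) - cnj (w + of_real t * u)) / 4 = b2 + of_real t * ((cnj v - cnj u) / 4)"
      "(cnj (z + of_real t * v) - (w + of_real t * u)) / 4 = b3 + of_real t * ((cnj v - u) / 4)"
      "(z + of_real t * v - cnj (w + of_real t * u)) / 4 = b4 + of_real t * ((v - cnj u) / 4)"
      by (simp_all add: b1_def b2_def b3_def b4_def field_simps)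
    show ?thesis
      unfolding Gamma_tw_def g_def args by simp
  qed
  ultimately show ?thesis
    using has_vector_derivative_real_field[of "\<lambda>\<zeta>. - 1 / 2 * Ln (g \<zeta>)" _ 0] by simp
qed

lemma Gamma_tw_wirtinger:
  fixes z w :: complex
  assumes z: "Im z > 0" and w: "Im w > 0" and zw: "sin ((z - w) / 2) \<noteq> 0"
  defines "a1 \<equiv> inverse (sin ((z - w) / 2))" and "a2 \<equiv> inverse (sin ((cnj z - cnj w) / 2))"
    and "a3 \<equiv> inverse (sin ((cnj z - w) / 2))" and "a4 \<equiv> inverse (sin ((z - cnj w) / 2))"
  shows "wz (\<lambda>z'. Gamma_tw z' w) z = (a4 - a1) / 4" and "wzb (\<lambda>z'. Gamma_tw z' w) z = (a3 - a2) / 4"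
    and "wz (\<lambda>w'. Gamma_tw z w') w = (a1 - a3) / 4" and "wzb (\<lambda>w'. Gamma_tw z w') w = (a2 - a4) / 4"
proof -
  note D = Gamma_tw_has_vector_derivative[OF z w zw, folded a1_def a2_def a3_def a4_def]
  have px_z: "px (\<lambda>z'. Gamma_tw z' w) z = - (a1 + a2 - a3 - a4) / 4"
    using vector_derivative_at[OF D[of 1 0]] by (simp add: px_def)
  have py_z: "py (\<lambda>z'. Gamma_tw z' w) z = - \<i> * (a1 - a2 + a3 - a4) / 4"
    using vector_derivative_at[OF D[of \<i> 0]] by (simp add: py_def mult.commute algebra_simps)
  have px_w: "px (\<lambda>w'. Gamma_tw z w') w = (a1 + a2 - a3 - a4) / 4"
    using vector_derivative_at[OF D[of 0 1]] by (simp add: px_def algebra_simps)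
  have py_w: "py (\<lambda>w'. Gamma_tw z w') w = \<i> * (a1 - a2 - a3 + a4) / 4"
    using vector_derivative_at[OF D[of 0 \<i>]] by (simp add: py_def mult.commute algebra_simps)
  show "wz (\<lambda>z'. Gamma_tw z' w) z = (a4 - a1) / 4" and "wzb (\<lambda>z'. Gamma_tw z' w) z = (a3 - a2) / 4"
    and "wz (\<lambda>w'. Gamma_tw z w') w = (a1 - a3) / 4" and "wzb (\<lambda>w'. Gamma_tw z w') w = (a2 - a4) / 4"
    by (simp_all only: wz_def wzb_def px_z py_z px_w py_w) (simp_all add: field_simps)
qed

lemma lie_two_Gamma_tw:
  fixes v :: "complex \<Rightarrow> complex" and z w :: complex
  assumes "Im z > 0" and "Im w > 0" and "sin ((z - w) / 2) \<noteq> 0"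
  shows "lie_two v Gamma_tw z w =
     ((v w - v z) * inverse (sin ((z - w) / 2))
      + (cnj (v w) - cnj (v z)) * inverse (sin ((cnj z - cnj w) / 2))
      + (cnj (v z) - v w) * inverse (sin ((cnj z - w) / 2))
      + (v z - cnj (v w)) * inverse (sin ((z - cnj w) / 2))) / 4"
  unfolding lie_two_def Gamma_tw_wirtinger[OF assms] by (simp add: algebra_simps add_divide_distrib diff_divide_distrib)

lemma cot_diff_div_sin_diff:
  fixes a b :: complex
  assumes "sin a \<noteq> 0" and "sin b \<noteq> 0" and "sin (a - b) \<noteq> 0"
  shows "(cot b - cot a) * inverse (sin (a - b)) = inverse (sin a * sin b)"
  using assms by (simp add: cot_def sin_diff field_simps)

lemma lie_two_cot_Gamma_tw:
  fixes \<nu> :: real and z w :: complex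
  assumes z: "Im z > 0" and w: "Im w > 0" and zw: "sin ((z - w) / 2) \<noteq> 0"
  shows "lie_two (\<lambda>z. 4 * cot (z / 2) - 2 * of_real \<nu>) Gamma_tw z w
    = of_real (- 4 * Im (inverse (sin (z / 2))) * Im (inverse (sin (w / 2))))"
proof -
  define \<delta> where "\<delta> = (\<lambda>z::complex. 4 * cot (z / 2) - 2 * of_real \<nu>)"
  define S where "S = (\<lambda>z::complex. sin (z / 2))"
  have S: "S x \<noteq> 0" if "Im x \<noteq> 0" for x
    using that by (auto simp: S_def intro!: sin_nonzero_if_Im_nonzero)
  have pair: "(\<delta> q - \<delta> p) * inverse (sin ((p - q) / 2)) = 4 * inverse (S p * S q)"
    if "Im p \<noteq> 0" "Im q \<noteq> 0" "sin ((p - q) / 2) \<noteq> 0" for p q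
    using cot_diff_div_sin_diff[of "p / 2" "q / 2"] S[OF that(1)] S[OF that(2)] that(3)
    by (simp add: \<delta>_def S_def diff_divide_distrib algebra_simps)
  have cnj_\<delta>: "cnj (\<delta> x) = \<delta> (cnj x)" for x
    by (simp add: \<delta>_def cot_def cnj_sin cnj_cos)
  have "sin ((cnj z - cnj w) / 2) = cnj (sin ((z - w) / 2))"
    by (simp add: cnj_sin)
  with zw have zw': "sin ((cnj z - cnj w) / 2) \<noteq> 0"
    by simp
  have zw'': "sin ((cnj z - w) / 2) \<noteq> 0" "sin ((z - cnj w) / 2) \<noteq> 0"
    using z w by (auto intro!: sin_nonzero_if_Im_nonzero)
  have "lie_two \<delta> Gamma_tw z w
     = (4 * inverse (S z * S w) + 4 * inverse (S (cnj z) * S (cnj w))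
        - 4 * inverse (S (cnj z) * S w) - 4 * inverse (S z * S (cnj w))) / 4"
    unfolding lie_two_Gamma_tw[OF z w zw] cnj_\<delta>
    using pair[of z w] pair[of "cnj z" "cnj w"] pair[of "cnj z" w] pair[of z "cnj w"] z w zw zw' zw''
    by (simp add: algebra_simps)
  also have "\<dots> = (inverse (S z) - cnj (inverse (S z))) * (inverse (S w) - cnj (inverse (S w)))"
    by (simp add: S_def cnj_sin algebra_simps add_divide_distrib diff_divide_distrib)
  also have "\<dots> = of_real (- 4 * Im (inverse (S z)) * Im (inverse (S w)))"
    by (simp add: complex_eq_iff)
  finally show ?thesis
    by (simp add: \<delta>_def S_def)
qed

lemma has_real_derivative_along_line:
  fixes f :: "complex \<Rightarrow> real"
  assumes "(f has_derivative D) (at (z + of_real t * v))"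
  shows "((\<lambda>t. f (z + of_real t * v)) has_real_derivative D v) (at t)"
proof -
  have "((\<lambda>t::real. z + of_real t * v) has_derivative (\<lambda>t. of_real t * v)) (at t)"
    by (auto intro!: derivative_eq_intros)
  from diff_chain_at[OF this assms]
  have "((\<lambda>t. f (z + of_real t * v)) has_derivative (\<lambda>t. D (of_real t * v))) (at t)"
    by (simp add: o_def)
  moreover have "(\<lambda>t. D (of_real t * v)) = (*) (D v)"
    using linear_cmul[OF has_derivative_linear[OF assms]] by (auto simp: scaleR_conv_of_real)
  ultimately show ?thesis
    by (simp add: has_field_derivative_def)
qed

lemma px_py_of_real:
  fixes \<eta> :: "complex \<Rightarrow> real"
  assumes "(\<eta> has_derivative D) (at z)"
  shows "px (\<lambda>z. of_real (\<eta> z)) z = of_real (D 1)" and "py (\<lambda>z. of_real (\<eta> z)) z = of_real (D \<i>)"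
proof -
  have "((\<lambda>t. of_real (\<eta> (z + of_real t * v))) has_vector_derivative of_real (D v)) (at 0)" for v
    using has_vector_derivative_of_real[OF has_real_derivative_along_line[of \<eta> D z 0 v]] assms
    by simp
  from vector_derivative_at[OF this[of 1]] vector_derivative_at[OF this[of \<i>]]
  show "px (\<lambda>z. of_real (\<eta> z)) z = of_real (D 1)" and "py (\<lambda>z. of_real (\<eta> z)) z = of_real (D \<i>)"
    by (simp_all add: px_def py_def mult.commute)
qed

lemma lie_scalar_of_real:
  fixes \<eta> :: "complex \<Rightarrow> real"
  assumes "(\<eta> has_derivative D) (at z)"
  shows "lie_scalar v (\<lambda>z. of_real (\<eta> z)) z = of_real (Re (v z) * D 1 + Im (v z) * D \<i>)"
  by (simp add: lie_scalar_def wz_def wzb_def px_py_of_real[OF assms] complex_eq_iff field_simps)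

lemma lie_scalar_const:
  "lie_scalar (\<lambda>_. of_real a) f z = of_real a * px f z"
  by (simp add: lie_scalar_def wz_def wzb_def field_simps)

lemma lie_pps_const:
  "lie_pps \<mu> \<mu>s (\<lambda>_. c) f z = lie_scalar (\<lambda>_. c) f z"
  by (simp add: lie_pps_def)

lemma lie_pps_constant_field_of_real:
  fixes \<eta> :: "complex \<Rightarrow> real" and s :: real
  assumes "(\<eta> has_derivative D) (at x)"
  shows "lie_pps \<mu> \<mu>s (\<lambda>_. - 2 * of_real s) (\<lambda>z. of_real (\<eta> z)) x = of_real (- 2 * s * D 1)"
  using lie_scalar_of_real[OF assms] by (simp add: lie_pps_const)

lemma horizontal_translation_invariant:
  fixes \<psi> :: "complex \<Rightarrow> real"
  assumes "\<And>x. Im x > 0 \<Longrightarrow> (\<psi> has_derivative D x) (at x)"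
    and "\<And>x. Im x > 0 \<Longrightarrow> D x 1 = 0"
    and "Im z > 0"
  shows "\<psi> (z + of_real a) = \<psi> z"
proof -
  have "((\<lambda>t. \<psi> (z + of_real t * 1)) has_real_derivative D (z + of_real t * 1) 1) (at t)" for t
    by (rule has_real_derivative_along_line, rule assms(1)) (use assms(3) in simp)
  then have "((\<lambda>t. \<psi> (z + of_real t * 1)) has_real_derivative 0) (at t)" for t
    using assms(2,3) by simp
  from DERIV_isconst_all[OF allI[OF this], of a 0] show ?thesis
    by simp
qed

section \<open>The function 1 / sin (z / 2)\<close>

lemma sin_cos_half_add_2pi:
  fixes z :: complex
  shows "sin ((z + of_real (2 * pi)) / 2) = - sin (z / 2)"
    and "cos ((z + of_real (2 * pi)) / 2) = - cos (z / 2)"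
proof -
  have half: "(z + of_real (2 * pi)) / 2 = z / 2 + of_real pi"
    by (simp add: field_simps)
  show "sin ((z + of_real (2 * pi)) / 2) = - sin (z / 2)"
    and "cos ((z + of_real (2 * pi)) / 2) = - cos (z / 2)"
    unfolding half sin_add cos_add by (simp_all add: sin_of_real cos_of_real)
qed

lemma DERIV_inverse_sin_half:
  fixes z :: complex
  assumes "sin (z / 2) \<noteq> 0"
  shows "((\<lambda>z. inverse (sin (z / 2))) has_field_derivative - (cos (z / 2) / (sin (z / 2))\<^sup>2) / 2) (at z)"
  using assms by (auto intro!: derivative_eq_intros simp: field_simps power2_eq_square)

lemma Im_inverse_sin_half_imaginary_axis:
  fixes y :: real
  assumes "y > 0"
  shows "Im (inverse (sin (\<i> * of_real y / 2))) \<noteq> 0"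
proof -
  have "sin (\<i> * of_real y / 2) = \<i> * of_real (sinh (y / 2))"
    by (simp add: complex_eq_iff Re_sin Im_sin sinh_def)
  with assms show ?thesis
    by simp
qed

lemma Re_one_minus_div_one_plus_pos:
  fixes q :: complex
  assumes "norm q < 1"
  shows "Re ((1 - q) / (1 + q)) > 0"
proof -
  have "1 + q \<noteq> 0"
    using assms by (metis add_eq_0_iff norm_minus_cancel norm_one order_less_irrefl)
  then have "(1 + Re q)\<^sup>2 + (Im q)\<^sup>2 > 0"
    by (simp add: complex_eq_iff sum_power2_gt_zero_iff)
  moreover have "(Re q)\<^sup>2 + (Im q)\<^sup>2 < 1"
    using assms by (metis cmod_power2 norm_ge_zero power_less_one_iff zero_less_numeral)
  moreover have "Re ((1 - q) / (1 + q)) = (1 - ((Re q)\<^sup>2 + (Im q)\<^sup>2)) / ((1 + Re q)\<^sup>2 + (Im q)\<^sup>2)"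
    by (simp add: Re_divide power2_eq_square algebra_simps)
  ultimately show ?thesis
    by simp
qed

text \<open>With \<open>q = exp (i z / 2)\<close> one has \<open>(1 - q) / (1 + q) = - i tan (z / 4)\<close>; for \<open>Im z > 0\<close> this
  ratio lies in the right half-plane, where \<open>Ln\<close> is holomorphic.\<close>

lemma DERIV_csc_half_primitive:
  fixes z :: complex
  assumes "Im z > 0"
  shows "((\<lambda>z. 2 * Ln ((1 - exp (\<i> * z / 2)) / (1 + exp (\<i> * z / 2)))) has_field_derivative
    inverse (sin (z / 2))) (at z)"
proof -
  define q where "q = exp (\<i> * z / 2)"
  have "norm q < 1"
    using assms by (simp add: q_def)
  then have q: "1 - q \<noteq> 0" "1 + q \<noteq> 0" and ratio: "(1 - q) / (1 + q) \<notin> \<real>\<^sub>\<le>\<^sub>0"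
    using Re_one_minus_div_one_plus_pos[of q] by (auto simp: complex_nonpos_Reals_iff)
  have "q \<noteq> 0"
    by (simp add: q_def)
  have cancel: "x / 2 / y * y = x / 2" if "y \<noteq> 0" for x y :: complex
    using that by simp
  have d1: "((\<lambda>z. 1 - exp (\<i> * z / 2)) has_field_derivative (- \<i> * q / 2 / (1 - q)) * (1 - q)) (at z)"
  proof (rule DERIV_cong)
    show "((\<lambda>z. 1 - exp (\<i> * z / 2)) has_field_derivative - \<i> * q / 2) (at z)"
      by (auto intro!: derivative_eq_intros simp: q_def)
  qed (simp only: cancel[OF q(1)])
  have d2: "((\<lambda>z. 1 + exp (\<i> * z / 2)) has_field_derivative (\<i> * q / 2 / (1 + q)) * (1 + q)) (at z)"
  proof (rule DERIV_cong)
    show "((\<lambda>z. 1 + exp (\<i> * z / 2)) has_field_derivative \<i> * q / 2) (at z)"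
      by (auto intro!: derivative_eq_intros simp: q_def)
  qed (simp only: cancel[OF q(2)])
  note quotient = DERIV_logderiv_divide[OF d1[unfolded q_def] d2[unfolded q_def]]
  have "((\<lambda>z. 2 * Ln ((1 - exp (\<i> * z / 2)) / (1 + exp (\<i> * z / 2)))) has_field_derivative
      2 * (- \<i> * q / 2 / (1 - q) - \<i> * q / 2 / (1 + q))) (at z)"
    unfolding q_def
    by (rule DERIV_cmult DERIV_Ln_logderiv quotient)+ (use q ratio in \<open>simp_all add: q_def\<close>)
  moreover have "2 * (- \<i> * q / 2 / (1 - q) - \<i> * q / 2 / (1 + q)) = inverse (sin (z / 2))"
  proof -
    have "q * q - 1 = - ((1 - q) * (1 + q))"
      by (simp add: algebra_simps)
    with q have qq: "q * q - 1 \<noteq> 0"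
      by simp
    have "sin (z / 2) = (q - inverse q) / (2 * \<i>)"
      unfolding sin_exp_eq q_def by (simp add: exp_minus mult.commute)
    then have "inverse (sin (z / 2)) = 2 * \<i> * q / (q * q - 1)"
      using \<open>q \<noteq> 0\<close> qq assms sin_nonzero_if_Im_nonzero[of "z / 2"] by (simp add: field_simps)
    also have "\<dots> = 2 * (- \<i> * q / 2 / (1 - q) - \<i> * q / 2 / (1 + q))"
      using q qq by (auto simp: field_simps add_eq_0_iff)
    finally show ?thesis ..
  qed
  ultimately show ?thesis
    by simp
qed

section \<open>The constraints on \<open>\<kappa>\<close> and \<open>\<nu>\<close>\<close>

lemma rank_one_of_separated_product:
  fixes F G :: "complex \<Rightarrow> real" and \<kappa> :: real
  assumes prod: "\<And>z w. Im z > 0 \<Longrightarrow> Im w > 0 \<Longrightarrow> Im z \<noteq> Im w \<Longrightarrow> \<kappa> * F z * F w = G z * G w"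
    and nonzero: "\<And>y. y > 0 \<Longrightarrow> G (\<i> * of_real y) \<noteq> 0"
  shows "\<exists>c. \<kappa> * c\<^sup>2 = 1 \<and> (\<forall>z. Im z > 0 \<longrightarrow> F z = c * G z)"
proof -
  define p where "p = (\<lambda>y::real. \<i> * of_real y)"
  have G: "G (p 1) \<noteq> 0" "G (p 2) \<noteq> 0" "G (p 3) \<noteq> 0"
    using nonzero[of 1] nonzero[of 2] nonzero[of 3] by (simp_all add: p_def)
  have "\<kappa> * F (p 1) * F (p 2) = G (p 1) * G (p 2)"
    by (rule prod) (simp_all add: p_def)
  with G have F1: "\<kappa> * F (p 1) \<noteq> 0"
    by auto
  define c where "c = G (p 1) / (\<kappa> * F (p 1))"
  have off_line: "F z = c * G z" if "Im z > 0" "Im z \<noteq> 1" for z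
  proof -
    have "\<kappa> * F z * F (p 1) = G z * G (p 1)"
      by (rule prod) (use that in \<open>simp_all add: p_def\<close>)
    with F1 show ?thesis
      by (simp add: c_def field_simps)
  qed
  have F2: "F (p 2) = c * G (p 2)" and F3: "F (p 3) = c * G (p 3)"
    by (simp_all add: off_line p_def)
  have "\<kappa> * F (p 2) * F (p 3) = G (p 2) * G (p 3)"
    by (rule prod) (simp_all add: p_def)
  with G have \<kappa>c: "\<kappa> * c\<^sup>2 = 1"
    by (simp add: F2 F3 power2_eq_square field_simps)
  have "F z = c * G z" if "Im z > 0" for z
  proof (cases "Im z = 1")
    case True
    have "\<kappa> * F z * F (p 2) = G z * G (p 2)"
      by (rule prod) (use that True in \<open>simp_all add: p_def\<close>)
    with G have "\<kappa> * c * F z = G z"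
      by (simp add: F2 algebra_simps)
    then have "(\<kappa> * c\<^sup>2) * F z = c * G z"
      by (simp add: power2_eq_square algebra_simps flip: \<open>\<kappa> * c * F z = G z\<close>)
    with \<kappa>c show ?thesis
      by simp
  qed (use off_line that in simp)
  with \<kappa>c show ?thesis
    by blast
qed

lemma vertical_derivative_antiperiodic_defect:
  fixes \<eta> :: "complex \<Rightarrow> real" and D :: "complex \<Rightarrow> complex \<Rightarrow> real" and c :: real
  assumes deriv: "\<And>x. Im x > 0 \<Longrightarrow> (\<eta> has_derivative D x) (at x)"
    and horizontal: "\<And>x. Im x > 0 \<Longrightarrow> D x 1 = c * Im (inverse (sin (x / 2)))"
    and z: "Im z > 0"
  shows "D z \<i> - D (z + of_real (2 * pi)) \<i> = 2 * c * Re (inverse (sin (z / 2)))"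
proof -
  \<comment> \<open>Subtracting \<open>c Im B\<close> with \<open>B' = 1 / sin (z / 2)\<close> leaves a horizontally invariant function;
    the defect comes from the antiperiodicity of \<open>1 / sin (z / 2)\<close>.\<close>
  define B where "B = (\<lambda>z. 2 * Ln ((1 - exp (\<i> * z / 2)) / (1 + exp (\<i> * z / 2))))"
  define \<psi> where "\<psi> = (\<lambda>z. \<eta> z - c * Im (B z))"
  define D\<psi> where "D\<psi> = (\<lambda>x v. D x v - c * Im (inverse (sin (x / 2)) * v))"
  have d\<psi>: "(\<psi> has_derivative D\<psi> x) (at x)" if "Im x > 0" for x
  proof -
    have "(B has_derivative (*) (inverse (sin (x / 2)))) (at x)"
      using DERIV_csc_half_primitive[OF that] by (simp add: B_def has_field_derivative_def)
    from has_derivative_diff[OF deriv[OF that] has_derivative_mult_right[OF has_derivative_Im[OF this], of c]]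
    show ?thesis
      by (simp add: \<psi>_def D\<psi>_def)
  qed
  define z' where "z' = z + of_real (2 * pi)"
  have shift: "\<psi> (z + of_real t * \<i>) = \<psi> (z' + of_real t * \<i>)" if "t \<in> {t. t > - Im z}" for t
    using horizontal_translation_invariant[OF d\<psi>, of "z + of_real t * \<i>" "2 * pi"] that horizontal
    by (simp add: D\<psi>_def z'_def algebra_simps)
  have "((\<lambda>t. \<psi> (z + of_real t * \<i>)) has_real_derivative D\<psi> z \<i>) (at 0)"
    using has_real_derivative_along_line[OF d\<psi>[of "z + of_real 0 * \<i>"]] z by simp
  moreover have "open {t. t > - Im z}" and "0 \<in> {t. t > - Im z}"
    using z by (simp_all add: open_Collect_less)
  ultimately have "((\<lambda>t. \<psi> (z' + of_real t * \<i>)) has_real_derivative D\<psi> z \<i>) (at 0)"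
    using shift by (rule has_field_derivative_transform_within_open)
  moreover have "((\<lambda>t. \<psi> (z' + of_real t * \<i>)) has_real_derivative D\<psi> z' \<i>) (at 0)"
    using has_real_derivative_along_line[OF d\<psi>[of "z' + of_real 0 * \<i>"]] z by (simp add: z'_def)
  ultimately have "D\<psi> z \<i> = D\<psi> z' \<i>"
    by (rule DERIV_unique)
  moreover have "inverse (sin (z' / 2)) = - inverse (sin (z / 2))"
    unfolding z'_def sin_cos_half_add_2pi by simp
  ultimately have "D z \<i> - c * Re (inverse (sin (z / 2))) = D z' \<i> - c * Re (- inverse (sin (z / 2)))"
    by (simp only: D\<psi>_def mult.commute[of _ \<i>] Im_i_times)
  then show ?thesis
    unfolding z'_def[symmetric] by simp
qed

lemma deriv_periodic:
  fixes f :: "complex \<Rightarrow> complex"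
  assumes "\<And>x. f (x + a) = f x"
  shows "deriv f (z + a) = deriv f z"
proof -
  have "(\<lambda>x. f (x + a)) = f"
    using assms by (rule ext)
  then show ?thesis
    unfolding deriv_def DERIV_shift by simp
qed

lemma lie_constant_field_second_order:
  fixes \<eta> :: "complex \<Rightarrow> real" and D :: "complex \<Rightarrow> complex \<Rightarrow> real" and s c :: real
  assumes deriv: "\<And>x. Im x > 0 \<Longrightarrow> (\<eta> has_derivative D x) (at x)"
    and horizontal: "\<And>x. Im x > 0 \<Longrightarrow> D x 1 = c * Im (inverse (sin (x / 2)))"
    and z: "Im z > 0"
  shows "lie_scalar (\<lambda>_. - 2 * of_real s) (lie_pps \<mu> \<mu>s (\<lambda>_. - 2 * of_real s) (\<lambda>z. of_real (\<eta> z))) z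
      = of_real (- 2 * s\<^sup>2 * c * Im (cos (z / 2) / (sin (z / 2))\<^sup>2))"
proof -
  have first: "lie_pps \<mu> \<mu>s (\<lambda>_. - 2 * of_real s) (\<lambda>z. of_real (\<eta> z)) x
      = of_real (- 2 * s * c * Im (inverse (sin (x / 2))))" if "Im x > 0" for x
    using lie_pps_constant_field_of_real[OF deriv[OF that]] horizontal[OF that] by simp
  define \<rho> where "\<rho> = (\<lambda>x. - 2 * s * c * Im (inverse (sin (x / 2))))"
  define Q where "Q = cos (z / 2) / (sin (z / 2))\<^sup>2"
  have "sin (z / 2) \<noteq> 0"
    using z by (intro sin_nonzero_if_Im_nonzero) simp
  from has_derivative_mult_right[OF has_derivative_Im[OF DERIV_inverse_sin_half[OF this,
          unfolded has_field_derivative_def, folded Q_def]], of "- 2 * s * c"]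
  have "(\<rho> has_derivative (\<lambda>v. - 2 * s * c * Im (- Q / 2 * v))) (at z)"
    by (simp add: \<rho>_def)
  then have "px (\<lambda>x. of_real (\<rho> x)) z = of_real (s * c * Im Q)"
    by (simp add: px_py_of_real(1))
  moreover have "lie_pps \<mu> \<mu>s (\<lambda>_. - 2 * of_real s) (\<lambda>z. of_real (\<eta> z)) (z + of_real t)
      = of_real (\<rho> (z + of_real t))" for t
    using first[of "z + of_real t"] z by (simp add: \<rho>_def)
  then have "px (lie_pps \<mu> \<mu>s (\<lambda>_. - 2 * of_real s) (\<lambda>z. of_real (\<eta> z))) z = px (\<lambda>x. of_real (\<rho> x)) z"
    by (simp add: px_def)
  ultimately show ?thesis
    using lie_scalar_const[of "- 2 * s"] by (simp add: Q_def power2_eq_square)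
qed

lemma drift_equation_antiperiodic_defect:
  fixes \<delta> :: "complex \<Rightarrow> complex" and \<eta> :: "complex \<Rightarrow> real" and D :: "complex \<Rightarrow> complex \<Rightarrow> real"
    and s c :: real
  assumes periodic: "\<And>x. \<delta> (x + of_real (2 * pi)) = \<delta> x"
    and deriv: "\<And>x. Im x > 0 \<Longrightarrow> (\<eta> has_derivative D x) (at x)"
    and horizontal: "\<And>x. Im x > 0 \<Longrightarrow> D x 1 = c * Im (inverse (sin (x / 2)))"
    and drift: "\<And>x. Im x > 0 \<Longrightarrow> lie_pps \<mu> \<mu>s \<delta> (\<lambda>z. of_real (\<eta> z)) x
        + 1 / 2 * lie_scalar (\<lambda>_. - 2 * of_real s) (lie_pps \<mu> \<mu>s (\<lambda>_. - 2 * of_real s) (\<lambda>z. of_real (\<eta> z))) x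
        = 0"
    and z: "Im z > 0"
  shows "c * Im (\<delta> z * inverse (sin (z / 2)) - of_real (s\<^sup>2) * (cos (z / 2) / (sin (z / 2))\<^sup>2)) = 0"
proof -
  define Q where "Q = (\<lambda>x. Im (cos (x / 2) / (sin (x / 2))\<^sup>2))"
  have real_form: "of_real (Re (\<delta> x) * D x 1 + Im (\<delta> x) * D x \<i>)
      + \<mu> * deriv \<delta> x + \<mu>s * cnj (deriv \<delta> x) = of_real (s\<^sup>2 * c * Q x)" if "Im x > 0" for x
    using drift[OF that] lie_scalar_of_real[OF deriv[OF that]]
      lie_constant_field_second_order[OF deriv horizontal that]
    by (simp add: lie_pps_def Q_def)
  \<comment> \<open>Comparing the equation at \<open>z\<close> and \<open>z + 2\<pi>\<close> cancels the terms in \<open>\<mu>\<close> and \<open>\<mu>s\<close>.\<close>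
  define z' where "z' = z + of_real (2 * pi)"
  have z': "Im z' > 0"
    using z by (simp add: z'_def)
  have "\<delta> z' = \<delta> z" and "deriv \<delta> z' = deriv \<delta> z"
    unfolding z'_def using periodic by (auto intro: deriv_periodic)
  with real_form[OF z'] have "of_real (Re (\<delta> z) * D z' 1 + Im (\<delta> z) * D z' \<i>)
      + \<mu> * deriv \<delta> z + \<mu>s * cnj (deriv \<delta> z) = of_real (s\<^sup>2 * c * Q z')"
    by simp
  from arg_cong2[where f = "(-)", OF real_form[OF z] this]
  have "Re (\<delta> z) * D z 1 - Re (\<delta> z) * D z' 1 + (Im (\<delta> z) * D z \<i> - Im (\<delta> z) * D z' \<i>)
      = s\<^sup>2 * c * Q z - s\<^sup>2 * c * Q z'"
    by (simp only: add_diff_add diff_self add_0_right of_real_eq_iff flip: of_real_diff)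
  moreover have "D z' 1 = - D z 1"
    using horizontal[OF z] horizontal[OF z'] unfolding z'_def sin_cos_half_add_2pi by simp
  moreover have "D z \<i> - D z' \<i> = 2 * c * Re (inverse (sin (z / 2)))"
    using vertical_derivative_antiperiodic_defect[OF deriv horizontal z] by (simp add: z'_def)
  moreover have "Q z' = - Q z"
    unfolding Q_def z'_def sin_cos_half_add_2pi by simp
  ultimately have "c * (Re (\<delta> z) * Im (inverse (sin (z / 2))) + Im (\<delta> z) * Re (inverse (sin (z / 2)))
      - s\<^sup>2 * Q z) = 0"
    using horizontal[OF z] by (simp add: algebra_simps del: inverse_complex.sel)
  then show ?thesis
    by (simp only: Q_def minus_complex.sel times_complex.sel Re_complex_of_real Im_complex_of_real
        mult_zero_left add_0_right)
qed

lemma kappa_nu_of_vanishing_Im: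
  fixes \<kappa> \<nu> :: real
  assumes vanish: "\<And>z. Im z > 0 \<Longrightarrow>
    Im ((4 * cot (z / 2) - 2 * of_real \<nu>) * inverse (sin (z / 2))
        - of_real \<kappa> * (cos (z / 2) / (sin (z / 2))\<^sup>2)) = 0"
  shows "\<kappa> = 4 \<and> \<nu> = 0"
proof -
  have sin_i: "sin \<i> = \<i> * of_real (sinh 1)" and cos_i: "cos \<i> = of_real (cosh 1)"
    by (simp_all add: complex_eq_iff Re_sin Im_sin Re_cos Im_cos sinh_def cosh_def)
  have "sinh (1::real) > 0"
    by simp
  have "Im ((4 * cot \<i> - 2 * of_real \<nu>) * inverse (sin \<i>) - of_real \<kappa> * (cos \<i> / (sin \<i>)\<^sup>2))
      = 2 * \<nu> / sinh 1"
    unfolding cot_def sin_i cos_i using \<open>sinh 1 > 0\<close>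
    by (simp add: field_simps power2_eq_square)
  with vanish[of "2 * \<i>"] \<open>sinh 1 > 0\<close> have "\<nu> = 0"
    by simp
  have half: "(of_real pi + 2 * \<i>) / 2 = of_real (pi / 2) + \<i>"
    by (simp add: field_simps)
  have "sin (of_real (pi / 2) + \<i>) = of_real (cosh 1)" and "cos (of_real (pi / 2) + \<i>) = - \<i> * of_real (sinh 1)"
    by (simp_all add: sin_add cos_add sin_of_real cos_of_real sin_i cos_i)
  then have "Im ((4 * cot ((of_real pi + 2 * \<i>) / 2) - 2 * of_real \<nu>) * inverse (sin ((of_real pi + 2 * \<i>) / 2))
      - of_real \<kappa> * (cos ((of_real pi + 2 * \<i>) / 2) / (sin ((of_real pi + 2 * \<i>) / 2))\<^sup>2))
      = (\<kappa> - 4) * sinh 1 / (cosh 1)\<^sup>2"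
    unfolding cot_def half by (simp add: field_simps power2_eq_square)
  with vanish[of "of_real pi + 2 * \<i>"] \<open>sinh 1 > 0\<close> have "\<kappa> = 4"
    by simp
  with \<open>\<nu> = 0\<close> show ?thesis
    by simp
qed

lemma second_equation_separates:
  fixes \<kappa> \<nu> :: real and \<eta> :: "complex \<Rightarrow> real" and D :: "complex \<Rightarrow> complex \<Rightarrow> real"
  assumes \<kappa>: "\<kappa> > 0"
    and deriv: "\<And>x. Im x > 0 \<Longrightarrow> (\<eta> has_derivative D x) (at x)"
    and second: "\<forall>z\<in>upper_half. \<forall>w\<in>upper_half. (\<forall>k::int. z - w \<noteq> of_real (2 * pi * of_int k)) \<longrightarrow>
      lie_two (\<lambda>z. 4 * cot (z / 2) - 2 * of_real \<nu>) Gamma_tw z w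
      + lie_pps \<mu> \<mu>s (\<lambda>_. - 2 * of_real (sqrt \<kappa>)) (\<lambda>z. of_real (\<eta> z)) z
        * lie_pps \<mu> \<mu>s (\<lambda>_. - 2 * of_real (sqrt \<kappa>)) (\<lambda>z. of_real (\<eta> z)) w = 0"
    and z: "Im z > 0" and w: "Im w > 0" and zw: "Im z \<noteq> Im w"
  shows "\<kappa> * D z 1 * D w 1 = Im (inverse (sin (z / 2))) * Im (inverse (sin (w / 2)))"
proof -
  have zw': "sin ((z - w) / 2) \<noteq> 0" and "\<forall>k::int. z - w \<noteq> of_real (2 * pi * of_int k)"
    using zw by (auto intro!: sin_nonzero_if_Im_nonzero dest: arg_cong[of _ _ Im])
  with second z w have "lie_two (\<lambda>z. 4 * cot (z / 2) - 2 * of_real \<nu>) Gamma_tw z w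
      + lie_pps \<mu> \<mu>s (\<lambda>_. - 2 * of_real (sqrt \<kappa>)) (\<lambda>z. of_real (\<eta> z)) z
        * lie_pps \<mu> \<mu>s (\<lambda>_. - 2 * of_real (sqrt \<kappa>)) (\<lambda>z. of_real (\<eta> z)) w = 0"
    unfolding upper_half_def by blast
  then have "of_real (- 4 * Im (inverse (sin (z / 2))) * Im (inverse (sin (w / 2)))
      + (- 2 * sqrt \<kappa> * D z 1) * (- 2 * sqrt \<kappa> * D w 1)) = (0::complex)"
    unfolding lie_two_cot_Gamma_tw[OF z w zw'] lie_pps_constant_field_of_real[OF deriv[OF z]]
      lie_pps_constant_field_of_real[OF deriv[OF w]]
    by (simp only: of_real_add of_real_mult)
  moreover have "(- 2 * sqrt \<kappa> * a) * (- 2 * sqrt \<kappa> * b) = 4 * (sqrt \<kappa>)\<^sup>2 * a * b" for a b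
    by algebra
  ultimately show ?thesis
    using \<kappa> by (simp only: of_real_eq_0_iff real_sqrt_pow2)
qed

theorem proposition6p1:
  fixes \<kappa> \<nu> :: real and \<mu> \<mu>s :: complex and \<eta> :: "complex \<Rightarrow> real"
  defines "\<delta> \<equiv> (\<lambda>z::complex. 4 * cot (z / 2) - 2 * of_real \<nu>)"
      and "\<sigma> \<equiv> (\<lambda>z::complex. - 2 * of_real (sqrt \<kappa>))"
      and "\<eta>c \<equiv> (\<lambda>z. complex_of_real (\<eta> z))"
  assumes "\<kappa> > 0"
      and "C2_on upper_half \<eta>"
      and "\<forall>z\<in>upper_half.
             lie_pps \<mu> \<mu>s \<delta> \<eta>c z + (1/2) * lie_scalar \<sigma> (lie_pps \<mu> \<mu>s \<sigma> \<eta>c) z = 0"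
      and "\<forall>z\<in>upper_half. \<forall>w\<in>upper_half. (\<forall>k::int. z - w \<noteq> of_real (2 * pi * of_int k)) \<longrightarrow>
             lie_two \<delta> Gamma_tw z w + lie_pps \<mu> \<mu>s \<sigma> \<eta>c z * lie_pps \<mu> \<mu>s \<sigma> \<eta>c w = 0"
      and "\<forall>z\<in>upper_half. \<forall>w\<in>upper_half. (\<forall>k::int. z - w \<noteq> of_real (2 * pi * of_int k)) \<longrightarrow>
             lie_two \<sigma> Gamma_tw z w = 0"
  shows "\<kappa> = 4 \<and> \<nu> = 0"
proof -
  obtain f' where f': "\<forall>z\<in>upper_half. (\<eta> has_derivative blinfun_apply (f' z)) (at z)"
    using assms(5) unfolding C2_on_def by blast
  define D where "D = (\<lambda>x. blinfun_apply (f' x))"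
  have deriv: "\<And>x. Im x > 0 \<Longrightarrow> (\<eta> has_derivative D x) (at x)"
    using f' by (simp add: upper_half_def D_def)
  have "\<kappa> * D z 1 * D w 1 = Im (inverse (sin (z / 2))) * Im (inverse (sin (w / 2)))"
    if "Im z > 0" "Im w > 0" "Im z \<noteq> Im w" for z w
    using second_equation_separates[OF assms(4) deriv assms(7)[unfolded \<delta>_def \<sigma>_def \<eta>c_def] that] .
  then obtain c where "\<kappa> * c\<^sup>2 = 1"
    and horizontal: "\<And>x. Im x > 0 \<Longrightarrow> D x 1 = c * Im (inverse (sin (x / 2)))"
    using rank_one_of_separated_product[where F = "\<lambda>x. D x 1" and G = "\<lambda>x. Im (inverse (sin (x / 2)))"]
      Im_inverse_sin_half_imaginary_axis by blast
  have "\<delta> (x + of_real (2 * pi)) = \<delta> x" for x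
    unfolding \<delta>_def cot_def sin_cos_half_add_2pi by simp
  from drift_equation_antiperiodic_defect[where \<delta> = \<delta> and D = D, OF this deriv horizontal]
  have "c * Im (\<delta> z * inverse (sin (z / 2)) - of_real ((sqrt \<kappa>)\<^sup>2) * (cos (z / 2) / (sin (z / 2))\<^sup>2)) = 0"
    if "Im z > 0" for z
    using assms(6) that unfolding \<sigma>_def \<eta>c_def upper_half_def by blast
  moreover have "c \<noteq> 0"
    using \<open>\<kappa> * c\<^sup>2 = 1\<close> by auto
  ultimately show ?thesis
    using assms(4) by (intro kappa_nu_of_vanishing_Im) (simp add: \<delta>_def)
qed

end
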